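(* Let $\nu>0$, $K>0$ and $d\in\mathbb{N}$, $d\ge2$. Define $\tau_0=\nu$ and $\tau_s=2\tau_{s-1}+3$ for $s\ge1$. There exists $p\in\mathbb{N}$ with the following property. Let $\theta_1,\ldots,\theta_p$ be irrational numbers for which there exists $C>0$ such that for every choice of pairwise distinct indices $i_1,\ldots,i_d\in\{1,\ldots,p\}$ and every $k\in\mathbb{Z}\setminus\{0\}$, $\max_{1\le m\le d}\|k\theta_{i_m}\|\ge C|k|^{-\nu}$. Then for every sufficiently large $U>0$ and every $V$ with $U\le V\le U^K$, there exist $k\in\{1,\ldots,p\}$ and integers $l<n$ such that $l,l+1,\ldots,n-1\in\mathcal{A}_{\tau_{d-1}}(\theta_k)$ and $$q_{k,l}\le U\le V\le q_{k,n}.$$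
   Context: $\|x\|$ is the distance from $x$ to the nearest integer. For an irrational $\alpha$, $(q_n)_{n\ge1}$ denotes the increasing sequence of denominators of the best rational approximations (convergents) of $\alpha$: $q_1=1$ and $\|k\alpha\|>\|q_n\alpha\|$ for all $0<k<q_{n+1}$, $k\ne q_n$. For $\theta_j$ this sequence is written $(q_{j,n})_n$. For $\tau>0$, $\mathcal{A}_\tau(\theta_j)=\{s\in\mathbb{N}: q_{j,s+1}\le q_{j,s}^\tau\}$; a run $l,\ldots,n-1$ of consecutive elements of $\mathcal{A}_\tau(\theta_j)$ is called a Diophantine string of exponent $\tau$. *)

theory Defs
  imports Complex_Main
begin

definition dnint :: "real \<Rightarrow> real" where
  "dnint x = min (x - of_int \<lfloor>x\<rfloor>) (of_int \<lceil>x\<rceil> - x)"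

text \<open>Denominators of best approximations, indexed from 1: q 1 = 1 and
  q (n+1) is the least k > q n with dnint (k*a) < dnint (q n * a); this is exactly
  the sequence determined by the paper's condition (for irrational a).
  The value at index 0 is a dummy and is never used.\<close>
fun convq :: "real \<Rightarrow> nat \<Rightarrow> nat" where
  "convq a 0 = 1"
| "convq a (Suc 0) = 1"
| "convq a (Suc (Suc n)) =
     (LEAST k. k > convq a (Suc n) \<and> dnint (real k * a) < dnint (real (convq a (Suc n)) * a))"

definition Aset :: "real \<Rightarrow> real \<Rightarrow> nat set" where
  "Aset tau a = {s. s \<ge> 1 \<and> real (convq a (s + 1)) \<le> real (convq a s) powr tau}"

fun tauseq :: "real \<Rightarrow> nat \<Rightarrow> real" where
  "tauseq nu 0 = nu"
| "tauseq nu (Suc s) = 2 * tauseq nu s + 3"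

end

theory Submission
  imports Defs "HOL-Analysis.Kronecker_Approximation_Theorem"
begin

(* Suppose that for every i no Diophantine string of exponent tau = tau_(d-1) covers [U, V].
   Walking along the convergents of theta_i from the last q_l <= U to the first q_n >= V one
   meets some s outside A_tau, and Q_i = q_s satisfies Q_i <= V and
   ||Q_i theta_i|| < 2 min(1/U, Q_i^(-tau)).  Sorting the numbers ln Q_i <= K ln U into
   O(K) windows of width proportional to ln U, the pigeonhole principle yields d indices whose
   Q_i are either all small or all of comparable size.  For the product k of these d
   denominators, ||k theta_i|| <= (k / Q_i) ||Q_i theta_i|| for each of them, and in both cases
   this is smaller than C k^(-nu), contradicting the hypothesis.  Only the linear bound
   tau_(d-1) >= nu + (d-1)(nu+3) is needed. *)

section \<open>Distance to the nearest integer\<close>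

lemma dnint_le_dist: "dnint x \<le> \<bar>x - of_int z\<bar>"
proof -
  have "z \<le> \<lfloor>x\<rfloor> \<or> \<lceil>x\<rceil> \<le> z"
    by (metis ceiling_le_iff floor_less_cancel le_floor_iff linorder_not_le not_less_iff_gr_or_eq of_int_less_iff)
  then show ?thesis
    unfolding dnint_def by (smt (verit) of_int_le_iff of_int_floor_le le_of_int_ceiling)
qed

lemma dnint_attained: "\<exists>z. dnint x = \<bar>x - of_int z\<bar>"
  unfolding dnint_def by (smt (verit) le_of_int_ceiling of_int_floor_le)

lemma dnint_nonneg: "0 \<le> dnint x"
  using dnint_attained by (metis abs_ge_zero)

lemma dnint_of_nat_mult_le: "dnint (real m * x) \<le> real m * dnint x"
proof -
  obtain z where z: "dnint x = \<bar>x - of_int z\<bar>"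
    using dnint_attained by blast
  have "dnint (real m * x) \<le> \<bar>real m * x - of_int (int m * z)\<bar>"
    by (rule dnint_le_dist)
  also have "\<dots> = real m * \<bar>x - of_int z\<bar>"
    by (simp add: abs_mult flip: right_diff_distrib)
  finally show ?thesis
    using z by simp
qed

lemma dnint_pos_if_irrational:
  assumes "a \<notin> \<rat>" "k \<ge> 1"
  shows "0 < dnint (real k * a)"
proof (rule ccontr)
  assume "\<not> 0 < dnint (real k * a)"
  then obtain z where "real k * a = of_int z"
    using dnint_attained[of "real k * a"] dnint_nonneg[of "real k * a"] by force
  then have "a = of_int z / real k"
    using assms(2) by (simp add: field_simps)
  then show False
    using assms(1) by simp
qed

lemma Dirichlet_dnint:
  assumes "N > 0"
  shows "\<exists>k. 1 \<le> k \<and> k \<le> N \<and> dnint (real k * a) < 1 / real N"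
proof -
  obtain h k where "0 < k" "k \<le> int N" "\<bar>of_int k * a - of_int h\<bar> < 1 / N"
    using Dirichlet_approx[OF assms] by blast
  then show ?thesis
    using dnint_le_dist[of "of_int k * a" h] by (intro exI[of _ "nat k"]) auto
qed

lemma ex_dnint_less:
  assumes "a \<notin> \<rat>" "q \<ge> 1"
  obtains k where "k \<ge> 1" "dnint (real k * a) < dnint (real q * a)"
proof -
  obtain N :: nat where "N > 0" "inverse (real N) < dnint (real q * a)"
    using ex_inverse_of_nat_less dnint_pos_if_irrational[OF assms] by blast
  then show ?thesis
    using Dirichlet_dnint[of N a] that by (force simp: divide_inverse)
qed

section \<open>Convergent denominators\<close>

definition best_approx :: "real \<Rightarrow> nat \<Rightarrow> bool" where
  "best_approx a q \<longleftrightarrow> 1 \<le> q \<and> (\<forall>k. 1 \<le> k \<and> k \<le> q \<longrightarrow> dnint (real q * a) \<le> dnint (real k * a))"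

lemma convq_Suc:
  assumes a: "a \<notin> \<rat>" and s: "s \<ge> 1" and best: "best_approx a (convq a s)"
  shows "convq a s < convq a (Suc s)"
    and "dnint (real (convq a (Suc s)) * a) < dnint (real (convq a s) * a)"
    and "\<And>k. convq a s < k \<Longrightarrow> k < convq a (Suc s) \<Longrightarrow>
           dnint (real (convq a s) * a) \<le> dnint (real k * a)"
proof -
  let ?q = "convq a s"
  define R where "R k \<longleftrightarrow> ?q < k \<and> dnint (real k * a) < dnint (real ?q * a)" for k
  have next_q: "convq a (Suc s) = (LEAST k. R k)"
    using s by (cases s) (auto simp: R_def)
  obtain k where "k \<ge> 1" "dnint (real k * a) < dnint (real ?q * a)"
    using ex_dnint_less a best by (auto simp: best_approx_def)
  then have "R k"
    using best by (force simp: R_def best_approx_def)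
  then have "R (convq a (Suc s))"
    unfolding next_q by (rule LeastI)
  then show "?q < convq a (Suc s)" "dnint (real (convq a (Suc s)) * a) < dnint (real ?q * a)"
    by (simp_all add: R_def)
  show "dnint (real ?q * a) \<le> dnint (real k * a)" if "?q < k" "k < convq a (Suc s)" for k
    using not_less_Least[of k R] that by (force simp: next_q R_def)
qed

lemma best_approx_convq:
  assumes a: "a \<notin> \<rat>" and "s \<ge> 1"
  shows "best_approx a (convq a s)"
  using \<open>s \<ge> 1\<close>
proof (induction s rule: dec_induct)
  case base
  show ?case
    by (auto simp: best_approx_def dest: le_antisym)
next
  case (step s)
  note next_q = convq_Suc[OF a step.hyps(1) step.IH]
  have "dnint (real (convq a (Suc s)) * a) \<le> dnint (real k * a)"
    if k: "1 \<le> k" "k \<le> convq a (Suc s)" for k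
  proof -
    consider "k \<le> convq a s" | "convq a s < k" "k < convq a (Suc s)" | "k = convq a (Suc s)"
      using k(2) by linarith
    then show ?thesis
      using next_q step.IH k(1) by cases (force simp: best_approx_def)+
  qed
  then show ?case
    using next_q(1) step.IH by (simp add: best_approx_def)
qed

lemma convq_less_Suc:
  assumes "a \<notin> \<rat>" "s \<ge> 1"
  shows "convq a s < convq a (Suc s)"
  using convq_Suc(1)[OF assms best_approx_convq[OF assms]] .

lemma convq_ge_index:
  assumes "a \<notin> \<rat>"
  shows "s \<le> convq a s"
proof (induction s)
  case (Suc s)
  then show ?case
    using convq_less_Suc[OF assms, of s] by (cases s) auto
qed simp

lemma dnint_convq_less:
  assumes a: "a \<notin> \<rat>" and s: "s \<ge> 1"
  shows "dnint (real (convq a s) * a) < 2 / real (convq a (Suc s))"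
proof -
  define N where "N = convq a (Suc s) - 1"
  have best: "best_approx a (convq a s)"
    using best_approx_convq[OF a s] .
  then have N: "N > 0" "real (convq a (Suc s)) = real N + 1"
    using convq_less_Suc[OF a s] by (auto simp: N_def best_approx_def)
  obtain k where k: "1 \<le> k" "k \<le> N" "dnint (real k * a) < 1 / real N"
    using Dirichlet_dnint[OF N(1)] by blast
  have "dnint (real (convq a s) * a) \<le> dnint (real k * a)"
    using best convq_Suc(3)[OF a s best, of k] k(1,2) N(1)
    by (cases "k \<le> convq a s") (auto simp: best_approx_def N_def)
  also have "\<dots> < 1 / real N"
    by (fact k(3))
  also have "\<dots> \<le> 2 / real (convq a (Suc s))"
    using N by (simp add: field_simps)
  finally show ?thesis .
qed

section \<open>Diophantine strings covering an interval\<close>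

definition diophantine_string_covers :: "real \<Rightarrow> real \<Rightarrow> real \<Rightarrow> real \<Rightarrow> bool" where
  "diophantine_string_covers \<tau> a U V \<longleftrightarrow>
     (\<exists>l n. l < n \<and> (\<forall>s\<in>{l..<n}. s \<in> Aset \<tau> a) \<and>
            real (convq a l) \<le> U \<and> V \<le> real (convq a n))"

lemma gap_if_not_covers:
  assumes a: "a \<notin> \<rat>" and U: "1 \<le> U" "U \<le> V"
    and not_covered: "\<not> diophantine_string_covers \<tau> a U V"
  obtains s where "s \<ge> 1" "s \<notin> Aset \<tau> a" "real (convq a s) \<le> V" "U < real (convq a (Suc s))"
proof -
  define below where "below = {s. 1 \<le> s \<and> real (convq a s) \<le> U}"
  define l where "l = Max below"
  have "real s \<le> U" if "s \<in> below" for s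
    using convq_ge_index[OF a, of s] that by (auto simp: below_def)
  then have "below \<subseteq> {..nat \<lfloor>U\<rfloor>}"
    using U(1) by (auto simp: le_nat_iff le_floor_iff)
  then have "finite below"
    by (rule finite_subset) simp
  moreover have "1 \<in> below"
    using U by (simp add: below_def)
  ultimately have "l \<in> below"
    unfolding l_def by (intro Max_in) auto
  then have l: "1 \<le> l" "real (convq a l) \<le> U"
    by (simp_all add: below_def)
  have above_l: "\<And>s. s \<in> below \<Longrightarrow> s \<le> l"
    using \<open>finite below\<close> by (simp add: l_def)
  define n0 where "n0 = max (Suc l) (nat \<lceil>V\<rceil>)"
  have "V \<le> real n0"
    unfolding n0_def by (metis real_nat_ceiling_ge max.cobounded2 of_nat_le_iff order_trans)
  also have "\<dots> \<le> real (convq a n0)"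
    using convq_ge_index[OF a] by simp
  finally have "\<exists>n. l < n \<and> V \<le> real (convq a n)"
    by (intro exI[of _ n0]) (simp add: n0_def)
  then obtain n where n: "l < n" "V \<le> real (convq a n)"
    and before_n: "\<And>m. m < n \<Longrightarrow> \<not> (l < m \<and> V \<le> real (convq a m))"
    unfolding exists_least_iff[of "\<lambda>n. l < n \<and> V \<le> real (convq a n)"] by blast
  have "\<not> (\<forall>s\<in>{l..<n}. s \<in> Aset \<tau> a)"
    using not_covered n l(2) unfolding diophantine_string_covers_def by blast
  then obtain s where s: "l \<le> s" "s < n" "s \<notin> Aset \<tau> a"
    by auto
  show ?thesis
  proof
    show "1 \<le> s"
      using l(1) s(1) by simp
    show "s \<notin> Aset \<tau> a"
      by (fact s(3))
    show "real (convq a s) \<le> V"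
      using l(2) U(2) before_n[OF s(2)] s(1) by (cases "s = l") auto
    show "U < real (convq a (Suc s))"
      using above_l[of "Suc s"] s(1) by (force simp: below_def)
  qed
qed

lemma good_denominator_if_not_covers:
  assumes a: "a \<notin> \<rat>" and U: "1 \<le> U" "U \<le> V"
    and not_covered: "\<not> diophantine_string_covers \<tau> a U V"
  obtains Q :: nat where "1 \<le> Q" "real Q \<le> V"
    "dnint (real Q * a) < 2 / U" "dnint (real Q * a) < 2 * real Q powr - \<tau>"
proof -
  obtain s where s: "s \<ge> 1" "s \<notin> Aset \<tau> a" "real (convq a s) \<le> V" "U < real (convq a (Suc s))"
    using gap_if_not_covers[OF assms] .
  define Q where "Q = convq a s"
  have Q: "1 \<le> Q"
    using best_approx_convq[OF a s(1)] by (simp add: Q_def best_approx_def)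
  have gap: "real Q powr \<tau> < real (convq a (Suc s))"
    using s(1,2) by (simp add: Q_def Aset_def)
  have approx: "dnint (real Q * a) < 2 / real (convq a (Suc s))"
    unfolding Q_def by (rule dnint_convq_less[OF a s(1)])
  show ?thesis
  proof (rule that[OF Q])
    show "real Q \<le> V"
      using s(3) by (simp add: Q_def)
    show "dnint (real Q * a) < 2 / U"
      using approx s(4) U(1) frac_less2[of 2 2 U "real (convq a (Suc s))"] by linarith
    have "2 / real (convq a (Suc s)) < 2 / real Q powr \<tau>"
      using gap Q by (intro frac_less2) auto
    then show "dnint (real Q * a) < 2 * real Q powr - \<tau>"
      using approx by (simp add: powr_minus divide_inverse)
  qed
qed

section \<open>Pigeonholing by logarithmic scale\<close>

lemma pigeonhole_fibre:
  assumes f: "f ` A \<subseteq> B" and B: "finite B" and card: "(d - 1) * card B < card A"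
  obtains S where "S \<subseteq> A" "card S = d" "\<exists>y. \<forall>i\<in>S. f i = y"
proof -
  have "\<exists>y\<in>B. d \<le> card {i\<in>A. f i = y}"
  proof (rule ccontr)
    assume "\<not> ?thesis"
    then have small: "\<And>y. y \<in> B \<Longrightarrow> card {i\<in>A. f i = y} \<le> d - 1"
      by force
    have "A = (\<Union>y\<in>B. {i\<in>A. f i = y})"
      using f by blast
    then have "card A \<le> (\<Sum>y\<in>B. card {i\<in>A. f i = y})"
      using card_UN_le[OF B] by metis
    also have "\<dots> \<le> (d - 1) * card B"
      using sum_mono[OF small] by (simp add: mult.commute)
    finally show False
      using card by linarith
  qed
  then obtain y S where "S \<subseteq> {i\<in>A. f i = y}" "card S = d"
    by (meson obtain_subset_with_card_n)
  then show ?thesis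
    using that[of S] by blast
qed

lemma nat_floor_divide_bounds:
  fixes x h :: real
  assumes "0 \<le> x" "0 < h"
  shows "real (nat \<lfloor>x / h\<rfloor>) * h \<le> x" "x < (real (nat \<lfloor>x / h\<rfloor>) + 1) * h"
proof -
  have "real (nat \<lfloor>x / h\<rfloor>) = of_int \<lfloor>x / h\<rfloor>"
    using assms by simp
  moreover have "of_int \<lfloor>x / h\<rfloor> * h \<le> x / h * h"
    using assms by (intro mult_right_mono) auto
  moreover have "x / h * h < (of_int \<lfloor>x / h\<rfloor> + 1) * h"
    using assms by (intro mult_strict_right_mono) linarith+
  ultimately show "real (nat \<lfloor>x / h\<rfloor>) * h \<le> x" "x < (real (nat \<lfloor>x / h\<rfloor>) + 1) * h"
    using assms by simp_all
qed

definition scale_level :: "real \<Rightarrow> nat \<Rightarrow> real \<Rightarrow> nat" where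
  "scale_level h M t = (if nat \<lfloor>t / h\<rfloor> < M then 0 else nat \<lfloor>t / h\<rfloor>)"

lemma scale_level_le:
  assumes h: "0 < h" and t: "0 \<le> t" "t < (real J + 1) * h"
  shows "scale_level h M t \<le> J"
proof -
  have "real (nat \<lfloor>t / h\<rfloor>) * h < (real J + 1) * h"
    using nat_floor_divide_bounds(1)[OF t(1) h] t(2) by linarith
  then have "real (nat \<lfloor>t / h\<rfloor>) < real J + 1"
    using h by simp
  then have "nat \<lfloor>t / h\<rfloor> \<le> J"
    by linarith
  then show ?thesis
    by (simp add: scale_level_def)
qed

lemma common_scale_level:
  fixes x :: "'a \<Rightarrow> real"
  assumes h: "0 < h" and x: "\<forall>i\<in>S. 0 \<le> x i" and level: "\<forall>i\<in>S. scale_level h M (x i) = y"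
  shows "(\<forall>i\<in>S. x i < real M * h) \<or>
    (\<exists>y::nat. M \<le> y \<and> (\<forall>i\<in>S. real y * h \<le> x i \<and> x i < (real y + 1) * h))"
proof -
  define j where "j i = nat \<lfloor>x i / h\<rfloor>" for i
  have window: "real (j i) * h \<le> x i" "x i < (real (j i) + 1) * h" if "i \<in> S" for i
    using nat_floor_divide_bounds[of "x i" h] x that h by (auto simp: j_def)
  show ?thesis
  proof (cases "\<forall>i\<in>S. j i < M")
    case True
    have "x i < real M * h" if "i \<in> S" for i
    proof -
      have "j i + 1 \<le> M"
        using True that by (simp add: Suc_le_eq)
      then have "real (j i) + 1 \<le> real M"
        by (metis of_nat_1 of_nat_add of_nat_le_iff)
      then have "(real (j i) + 1) * h \<le> real M * h"
        using h by (intro mult_right_mono) auto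
      then show ?thesis
        using window(2)[OF that] by linarith
    qed
    then show ?thesis
      by blast
  next
    case False
    then obtain i0 where i0: "i0 \<in> S" "M \<le> j i0"
      by force
    then have M_le: "M \<le> y"
      using level by (auto simp: scale_level_def j_def)
    then have j_eq: "j i = y" if "i \<in> S" for i
      using level that by (auto simp: scale_level_def j_def split: if_splits)
    have "\<forall>i\<in>S. real y * h \<le> x i \<and> x i < (real y + 1) * h"
      using window j_eq by auto
    then show ?thesis
      using M_le by blast
  qed
qed

lemma common_scale_subset:
  fixes x :: "'a \<Rightarrow> real" and J M :: nat
  assumes h: "0 < h" and x: "\<forall>i\<in>I. 0 \<le> x i \<and> x i < (real J + 1) * h"
    and card: "(d - 1) * (J + 1) < card I"
  obtains S where "S \<subseteq> I" "card S = d"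
    "(\<forall>i\<in>S. x i < real M * h) \<or>
     (\<exists>y::nat. M \<le> y \<and> (\<forall>i\<in>S. real y * h \<le> x i \<and> x i < (real y + 1) * h))"
proof -
  have range: "(\<lambda>i. scale_level h M (x i)) ` I \<subseteq> {0..J}"
    using scale_level_le[OF h] x by auto
  have "(d - 1) * card {0..J} < card I"
    using card by simp
  then obtain S where S: "S \<subseteq> I" "card S = d" and "\<exists>y. \<forall>i\<in>S. scale_level h M (x i) = y"
    by (rule pigeonhole_fibre[OF range finite_atLeastAtMost])
  then obtain y where y: "\<forall>i\<in>S. scale_level h M (x i) = y"
    by blast
  have "\<forall>i\<in>S. 0 \<le> x i"
    using x S(1) by auto
  then show ?thesis
    by (rule that[OF S common_scale_level[OF h _ y]])
qed

section \<open>Products of good denominators\<close>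

lemma dnint_prod_le:
  fixes Q :: "'a \<Rightarrow> nat"
  assumes "finite S" "i0 \<in> S"
  shows "dnint (real (\<Prod>i\<in>S. Q i) * x) \<le> (\<Prod>i\<in>S - {i0}. real (Q i)) * dnint (real (Q i0) * x)"
proof -
  have "real (\<Prod>i\<in>S. Q i) * x = real (\<Prod>i\<in>S - {i0}. Q i) * (real (Q i0) * x)"
    using assms by (simp add: prod.remove mult_ac)
  then show ?thesis
    using dnint_of_nat_mult_le by (metis of_nat_prod)
qed

lemma mult_le_powr_if_ln_le:
  fixes r e P C \<nu> :: real
  assumes "0 < r" "0 < e" "0 < P" "0 < C" "ln e + ln r + \<nu> * ln P \<le> ln C"
  shows "r * e \<le> C * P powr - \<nu>"
proof -
  have "ln (r * e) \<le> ln (C * P powr - \<nu>)"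
    using assms by (simp add: ln_mult ln_powr)
  then show ?thesis
    using assms by simp
qed

lemma prod_bound_if_small:
  fixes Q :: "'a \<Rightarrow> real"
  assumes S: "finite S" and Q: "\<forall>i\<in>S. 1 \<le> Q i" and C: "0 < C" and U: "0 < U"
    and small: "(1 + \<nu>) * (\<Sum>i\<in>S. ln (Q i)) \<le> ln U / 2"
    and U_large: "2 * \<bar>ln (C / 2)\<bar> \<le> ln U"
    and e: "e < 2 / U"
  shows "(\<Prod>i\<in>S - {i0}. Q i) * e < C * (\<Prod>i\<in>S. Q i) powr - \<nu>"
proof -
  define r where "r = (\<Prod>i\<in>S - {i0}. Q i)"
  define P where "P = (\<Prod>i\<in>S. Q i)"
  have pos: "0 < r" "0 < P"
    using Q by (auto simp: r_def P_def intro!: prod_pos)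
  have ln_P: "ln P = (\<Sum>i\<in>S. ln (Q i))"
    using S Q by (force simp: P_def intro: ln_prod)
  have "ln r = (\<Sum>i\<in>S - {i0}. ln (Q i))"
    using S Q by (force simp: r_def intro: ln_prod)
  also have "\<dots> \<le> (\<Sum>i\<in>S. ln (Q i))"
    using S Q by (intro sum_mono2) auto
  finally have "ln r + \<nu> * ln P \<le> ln U / 2"
    using small ln_P by (simp add: algebra_simps)
  moreover have "ln (2 / U) = ln 2 - ln U" "ln C = ln 2 + ln (C / 2)"
    using U C by (simp_all add: ln_div)
  ultimately have "ln (2 / U) + ln r + \<nu> * ln P \<le> ln C"
    using U_large by linarith
  then have "r * (2 / U) \<le> C * P powr - \<nu>"
    using pos C U by (intro mult_le_powr_if_ln_le) auto
  moreover have "r * e < r * (2 / U)"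
    using e pos by (intro mult_strict_left_mono)
  ultimately show ?thesis
    by (simp add: r_def P_def)
qed

lemma common_scale_exponent_bound:
  fixes R x0 y h c :: real
  assumes R: "R \<le> (real d - 1) * ((y + 1) * h)" and x0: "y * h \<le> x0"
    and d: "d \<ge> 2" and \<nu>: "0 \<le> \<nu>" and y: "\<nu> + 2 \<le> 2 * y" and c: "0 \<le> c" "c \<le> h"
    and \<tau>: "\<nu> + (real d - 1) * (\<nu> + 3) \<le> \<tau>"
  shows "(1 + \<nu>) * R - (\<tau> - \<nu>) * x0 \<le> - c"
proof -
  have "0 \<le> h"
    using c by linarith
  have "(1 + \<nu>) * R \<le> (1 + \<nu>) * ((real d - 1) * ((y + 1) * h))"
    using R \<nu> by (intro mult_left_mono) auto
  moreover have "(real d - 1) * (\<nu> + 3) * (y * h) \<le> (\<tau> - \<nu>) * x0"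
  proof (rule mult_mono)
    have "0 \<le> (real d - 1) * (\<nu> + 3)"
      using d \<nu> by (intro mult_nonneg_nonneg) auto
    then show "0 \<le> \<tau> - \<nu>"
      using \<tau> by linarith
    show "0 \<le> y * h"
      using y \<nu> \<open>0 \<le> h\<close> by simp
  qed (use \<tau> x0 in auto)
  moreover have "(1 + \<nu>) * ((real d - 1) * ((y + 1) * h)) - (real d - 1) * (\<nu> + 3) * (y * h)
      = (real d - 1) * h * (1 + \<nu> - 2 * y)"
    by (simp add: algebra_simps)
  moreover have "(real d - 1) * h * (1 + \<nu> - 2 * y) \<le> (real d - 1) * h * (- 1)"
    using y d \<open>0 \<le> h\<close> by (intro mult_left_mono) auto
  moreover have "h \<le> (real d - 1) * h"
    using d \<open>0 \<le> h\<close> by (simp add: mult_le_cancel_right1)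
  ultimately show ?thesis
    using c by linarith
qed

lemma prod_bound_if_common_scale:
  fixes Q :: "'a \<Rightarrow> real" and y h :: real
  assumes S: "finite S" "i0 \<in> S" "card S = d" "d \<ge> 2" and Q: "\<forall>i\<in>S. 1 \<le> Q i"
    and \<nu>: "0 \<le> \<nu>" and C: "0 < C"
    and scale: "\<forall>i\<in>S. y * h \<le> ln (Q i) \<and> ln (Q i) < (y + 1) * h"
    and y: "\<nu> + 2 \<le> 2 * y" and h: "\<bar>ln (C / 2)\<bar> \<le> h"
    and \<tau>: "\<nu> + (real d - 1) * (\<nu> + 3) \<le> \<tau>"
    and e: "e < 2 * Q i0 powr - \<tau>"
  shows "(\<Prod>i\<in>S - {i0}. Q i) * e < C * (\<Prod>i\<in>S. Q i) powr - \<nu>"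
proof -
  define r where "r = (\<Prod>i\<in>S - {i0}. Q i)"
  define P where "P = (\<Prod>i\<in>S. Q i)"
  define x0 where "x0 = ln (Q i0)"
  have pos: "0 < r" "0 < P" "0 < Q i0"
    using Q S(2) by (auto simp: r_def P_def intro!: prod_pos)
  have "P = Q i0 * r"
    using S(1,2) by (simp add: P_def r_def prod.remove)
  then have ln_P: "ln P = x0 + ln r"
    using pos by (simp add: x0_def ln_mult)
  have "ln r = (\<Sum>i\<in>S - {i0}. ln (Q i))"
    using S Q by (force simp: r_def intro: ln_prod)
  also have "\<dots> \<le> (\<Sum>i\<in>S - {i0}. (y + 1) * h)"
    using scale by (intro sum_mono) (simp add: less_imp_le)
  also have "\<dots> = (real d - 1) * ((y + 1) * h)"
    using S by (simp add: of_nat_diff)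
  finally have "(1 + \<nu>) * ln r - (\<tau> - \<nu>) * x0 \<le> - \<bar>ln (C / 2)\<bar>"
    using scale S(2) S(4) \<nu> y h \<tau>
    by (intro common_scale_exponent_bound) (auto simp: x0_def)
  moreover have "ln (2 * Q i0 powr - \<tau>) = ln 2 - \<tau> * x0" "ln C = ln 2 + ln (C / 2)"
    using pos C by (simp_all add: x0_def ln_mult ln_powr ln_div)
  moreover have "\<nu> * ln P = \<nu> * x0 + \<nu> * ln r" "(1 + \<nu>) * ln r = ln r + \<nu> * ln r"
    "(\<tau> - \<nu>) * x0 = \<tau> * x0 - \<nu> * x0"
    using ln_P by (simp_all add: algebra_simps)
  ultimately have "ln (2 * Q i0 powr - \<tau>) + ln r + \<nu> * ln P \<le> ln C"
    by linarith
  then have "r * (2 * Q i0 powr - \<tau>) \<le> C * P powr - \<nu>"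
    using pos C by (intro mult_le_powr_if_ln_le) auto
  moreover have "r * e < r * (2 * Q i0 powr - \<tau>)"
    using e pos by (intro mult_strict_left_mono)
  ultimately show ?thesis
    by (simp add: r_def P_def)
qed

section \<open>Simultaneous approximation of several irrationals\<close>

lemma far_index_if_injective_tuples:
  assumes far: "\<forall>\<iota> :: nat \<Rightarrow> nat. (\<iota> ` {1..d} \<subseteq> {1..p} \<and> inj_on \<iota> {1..d}) \<longrightarrow>
      (\<forall>k::int. k \<noteq> 0 \<longrightarrow>
         (MAX m\<in>{1..d}. dnint (of_int k * \<theta> (\<iota> m))) \<ge> C * \<bar>real_of_int k\<bar> powr (-\<nu>))"
    and d: "d \<ge> 1" and S: "S \<subseteq> {1..p}" "card S = d" and k: "k \<noteq> 0"
  obtains i where "i \<in> S" "C * \<bar>real_of_int k\<bar> powr (-\<nu>) \<le> dnint (of_int k * \<theta> i)"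
proof -
  obtain \<iota> where \<iota>: "bij_betw \<iota> {1..d} S"
    using ex_bij_betw_nat_finite_1[of S] S(2) d card.infinite by force
  then have "C * \<bar>real_of_int k\<bar> powr (-\<nu>) \<le> (MAX m\<in>{1..d}. dnint (of_int k * \<theta> (\<iota> m)))"
    using far S(1) k by (auto simp: bij_betw_def)
  moreover have "(MAX m\<in>{1..d}. dnint (of_int k * \<theta> (\<iota> m))) \<in> (\<lambda>m. dnint (of_int k * \<theta> (\<iota> m))) ` {1..d}"
    using d by (intro Max_in) auto
  then obtain m where "m \<in> {1..d}"
    "(MAX m\<in>{1..d}. dnint (of_int k * \<theta> (\<iota> m))) = dnint (of_int k * \<theta> (\<iota> m))"
    by auto
  ultimately show ?thesis
    using that \<iota> bij_betwE by metis
qed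

lemma tauseq_ge:
  assumes "0 \<le> \<nu>"
  shows "\<nu> + real s * (\<nu> + 3) \<le> tauseq \<nu> s"
proof (induction s)
  case (Suc s)
  have "0 \<le> real s * (\<nu> + 3)"
    using assms by simp
  moreover have "\<nu> + real (Suc s) * (\<nu> + 3) = \<nu> + real s * (\<nu> + 3) + (\<nu> + 3)"
    by (simp add: algebra_simps)
  moreover have "tauseq \<nu> (Suc s) = 2 * tauseq \<nu> s + 3"
    by simp
  ultimately show ?case
    using Suc by linarith
qed simp

context
  fixes \<nu> K w \<tau> C :: real and d M J p :: nat and \<theta> :: "nat \<Rightarrow> real"
  assumes \<nu>: "0 \<le> \<nu>" and d: "2 \<le> d" and w: "0 < w"
    and M: "\<nu> + 2 \<le> 2 * real M" and dMw: "(1 + \<nu>) * real d * real M * w \<le> 1 / 2"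
    and J: "K < (real J + 1) * w" and p: "p = (d - 1) * (J + 1) + 1"
    and \<tau>: "\<nu> + (real d - 1) * (\<nu> + 3) \<le> \<tau>"
    and C: "0 < C"
    and far: "\<forall>\<iota> :: nat \<Rightarrow> nat. (\<iota> ` {1..d} \<subseteq> {1..p} \<and> inj_on \<iota> {1..d}) \<longrightarrow>
      (\<forall>k::int. k \<noteq> 0 \<longrightarrow>
         (MAX m\<in>{1..d}. dnint (of_int k * \<theta> (\<iota> m))) \<ge> C * \<bar>real_of_int k\<bar> powr (-\<nu>))"
begin

lemma prod_bound_on_common_scale:
  fixes Q :: "'a \<Rightarrow> real"
  assumes U: "1 < U" "2 * \<bar>ln (C / 2)\<bar> \<le> ln U" and h: "h = w * ln U" "\<bar>ln (C / 2)\<bar> \<le> h"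
    and S: "finite S" "card S = d" "i0 \<in> S" and Q: "\<forall>i\<in>S. 1 \<le> Q i"
    and e: "e < 2 / U" "e < 2 * Q i0 powr - \<tau>"
    and scale: "(\<forall>i\<in>S. ln (Q i) < real M * h) \<or>
      (\<exists>y::nat. M \<le> y \<and> (\<forall>i\<in>S. real y * h \<le> ln (Q i) \<and> ln (Q i) < (real y + 1) * h))"
  shows "(\<Prod>i\<in>S - {i0}. Q i) * e < C * (\<Prod>i\<in>S. Q i) powr - \<nu>"
  using scale
proof
  assume small: "\<forall>i\<in>S. ln (Q i) < real M * h"
  have "(\<Sum>i\<in>S. ln (Q i)) \<le> real (card S) * (real M * h)"
    using small by (intro sum_bounded_above) (simp add: less_imp_le)
  then have "(1 + \<nu>) * (\<Sum>i\<in>S. ln (Q i)) \<le> ((1 + \<nu>) * real d * real M * w) * ln U"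
    using \<nu> S(2) by (simp add: h mult_left_mono mult_ac)
  also have "\<dots> \<le> ln U / 2"
    using mult_right_mono[OF dMw, of "ln U"] U(1) by simp
  finally have "(1 + \<nu>) * (\<Sum>i\<in>S. ln (Q i)) \<le> ln U / 2" .
  moreover have "0 < U"
    using U(1) by simp
  ultimately show ?thesis
    using S(1) Q C U(2) e(1) by (intro prod_bound_if_small)
next
  assume "\<exists>y::nat. M \<le> y \<and> (\<forall>i\<in>S. real y * h \<le> ln (Q i) \<and> ln (Q i) < (real y + 1) * h)"
  then obtain y :: nat where y: "M \<le> y"
    and window: "\<forall>i\<in>S. real y * h \<le> ln (Q i) \<and> ln (Q i) < (real y + 1) * h"
    by blast
  have "\<nu> + 2 \<le> 2 * real y"
    using M y by linarith
  then show ?thesis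
    using prod_bound_if_common_scale[OF S(1,3,2) d Q \<nu> C window _ h(2) \<tau> e(2)] by simp
qed

lemma no_simultaneous_good_denominators:
  fixes Q :: "nat \<Rightarrow> nat"
  assumes U: "1 < U" "2 * \<bar>ln (C / 2)\<bar> \<le> ln U" "\<bar>ln (C / 2)\<bar> \<le> w * ln U"
    and Q: "\<forall>i\<in>{1..p}. 1 \<le> Q i \<and> real (Q i) \<le> U powr K \<and>
      dnint (real (Q i) * \<theta> i) < 2 / U \<and> dnint (real (Q i) * \<theta> i) < 2 * real (Q i) powr - \<tau>"
  shows False
proof -
  define h where "h = w * ln U"
  have h: "0 < h" "\<bar>ln (C / 2)\<bar> \<le> h"
    using w U(1,3) by (simp_all add: h_def)
  have "\<forall>i\<in>{1..p}. 0 \<le> ln (real (Q i)) \<and> ln (real (Q i)) < (real J + 1) * h"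
  proof
    fix i
    assume i: "i \<in> {1..p}"
    have Qi: "1 \<le> Q i" "real (Q i) \<le> U powr K"
      using Q i by auto
    then have "ln (real (Q i)) \<le> ln (U powr K)"
      using U(1) by (subst ln_le_cancel_iff) auto
    also have "\<dots> < (real J + 1) * h"
      using mult_strict_right_mono[OF J, of "ln U"] U(1) by (simp add: ln_powr h_def mult_ac)
    finally show "0 \<le> ln (real (Q i)) \<and> ln (real (Q i)) < (real J + 1) * h"
      using Qi by simp
  qed
  moreover have "(d - 1) * (J + 1) < card {1..p}"
    using p by simp
  ultimately obtain S where S: "S \<subseteq> {1..p}" "card S = d"
    and scale: "(\<forall>i\<in>S. ln (real (Q i)) < real M * h) \<or>
      (\<exists>y::nat. M \<le> y \<and> (\<forall>i\<in>S. real y * h \<le> ln (real (Q i)) \<and> ln (real (Q i)) < (real y + 1) * h))"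
    by (rule common_scale_subset[OF h(1)])
  have fin: "finite S"
    using S(1) finite_subset by blast
  have QS: "\<forall>i\<in>S. 1 \<le> real (Q i)"
    using Q S(1) by auto
  define k where "k = (\<Prod>i\<in>S. Q i)"
  have "0 < k"
    unfolding k_def using QS by (intro prod_pos) auto
  then have "1 \<le> d" "int k \<noteq> 0"
    using d by auto
  then obtain i0 where i0: "i0 \<in> S"
    and "C * \<bar>real_of_int (int k)\<bar> powr - \<nu> \<le> dnint (real_of_int (int k) * \<theta> i0)"
    by (rule far_index_if_injective_tuples[OF far _ S])
  then have "C * real k powr - \<nu> \<le> dnint (real k * \<theta> i0)"
    by simp
  also have "\<dots> \<le> (\<Prod>i\<in>S - {i0}. real (Q i)) * dnint (real (Q i0) * \<theta> i0)"
    unfolding k_def using fin i0 by (rule dnint_prod_le)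
  also have "\<dots> < C * real k powr - \<nu>"
    unfolding k_def of_nat_prod using U(1,2) h_def h(2) fin S(2) i0 QS Q S(1) scale
    by (intro prod_bound_on_common_scale) auto
  finally show False
    by simp
qed

lemma covering_string_exists:
  assumes irr: "\<forall>i\<in>{1..p}. \<theta> i \<notin> \<rat>"
  shows "\<exists>U0. \<forall>U V. U0 \<le> U \<and> U \<le> V \<and> V \<le> U powr K \<longrightarrow>
           (\<exists>k\<in>{1..p}. diophantine_string_covers \<tau> (\<theta> k) U V)"
proof (intro exI allI impI)
  define c where "c = \<bar>ln (C / 2)\<bar>"
  fix U V
  assume UV: "exp ((2 + 1 / w) * c) + 1 \<le> U \<and> U \<le> V \<and> V \<le> U powr K"
  then have "1 < U" "exp ((2 + 1 / w) * c) < U"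
    using exp_gt_zero[of "(2 + 1 / w) * c"] by linarith+
  then have U: "1 < U" "2 * c + c / w < ln U"
    using ln_less_cancel_iff[of "exp ((2 + 1 / w) * c)" U] by (auto simp: algebra_simps)
  have "0 \<le> c / w"
    using w by (simp add: c_def)
  then have "2 * c \<le> ln U" "c / w \<le> ln U"
    using U by (simp_all add: c_def)
  then have large_U: "2 * c \<le> ln U" "c \<le> w * ln U"
    using w by (simp_all add: pos_divide_le_eq mult.commute)
  show "\<exists>k\<in>{1..p}. diophantine_string_covers \<tau> (\<theta> k) U V"
  proof (rule ccontr)
    assume none: "\<not> ?thesis"
    have "\<forall>i\<in>{1..p}. \<exists>Q::nat. 1 \<le> Q \<and> real Q \<le> U powr K \<and>
        dnint (real Q * \<theta> i) < 2 / U \<and> dnint (real Q * \<theta> i) < 2 * real Q powr - \<tau>"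
    proof
      fix i
      assume i: "i \<in> {1..p}"
      have "\<theta> i \<notin> \<rat>" "1 \<le> U" "U \<le> V" "\<not> diophantine_string_covers \<tau> (\<theta> i) U V"
        using irr none UV U(1) i by auto
      then obtain Q :: nat where "1 \<le> Q" "real Q \<le> V"
        "dnint (real Q * \<theta> i) < 2 / U" "dnint (real Q * \<theta> i) < 2 * real Q powr - \<tau>"
        by (rule good_denominator_if_not_covers)
      then show "\<exists>Q::nat. 1 \<le> Q \<and> real Q \<le> U powr K \<and>
          dnint (real Q * \<theta> i) < 2 / U \<and> dnint (real Q * \<theta> i) < 2 * real Q powr - \<tau>"
        using UV by (intro exI[of _ Q]) auto
    qed
    then obtain Q where Q: "\<forall>i\<in>{1..p}. 1 \<le> Q i \<and> real (Q i) \<le> U powr K \<and>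
        dnint (real (Q i) * \<theta> i) < 2 / U \<and> dnint (real (Q i) * \<theta> i) < 2 * real (Q i) powr - \<tau>"
      by (rule bchoice[THEN exE])
    show False
      using U(1) large_U Q unfolding c_def by (rule no_simultaneous_good_denominators)
  qed
qed

end

theorem mainTheorem4:
  fixes \<nu> K :: real and d :: nat
  assumes "\<nu> > 0" and "K > 0" and "d \<ge> 2"
  shows "\<exists>p::nat. \<forall>\<theta> :: nat \<Rightarrow> real.
     ((\<forall>i\<in>{1..p}. \<theta> i \<notin> \<rat>) \<and>
      (\<exists>C>0. \<forall>\<iota> :: nat \<Rightarrow> nat.
          (\<iota> ` {1..d} \<subseteq> {1..p} \<and> inj_on \<iota> {1..d}) \<longrightarrow>
          (\<forall>k::int. k \<noteq> 0 \<longrightarrow>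
             (MAX m\<in>{1..d}. dnint (of_int k * \<theta> (\<iota> m))) \<ge> C * \<bar>real_of_int k\<bar> powr (-\<nu>))))
     \<longrightarrow>
     (\<exists>U0. \<forall>U V::real. U \<ge> U0 \<and> U > 0 \<and> U \<le> V \<and> V \<le> U powr K \<longrightarrow>
        (\<exists>k\<in>{1..p}. \<exists>l n::nat. l < n \<and>
            (\<forall>s\<in>{l..<n}. s \<in> Aset (tauseq \<nu> (d - 1)) (\<theta> k)) \<and>
            real (convq (\<theta> k) l) \<le> U \<and> V \<le> real (convq (\<theta> k) n)))"
proof -
  define M :: nat where "M = nat \<lceil>\<nu>\<rceil> + 1"
  define w where "w = 1 / (2 * real d * real M * (1 + \<nu>))"
  define J where "J = nat \<lfloor>K / w\<rfloor>"
  have "1 \<le> M"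
    by (simp add: M_def)
  then have "0 < real d * real M * (1 + \<nu>)"
    using assms by (intro mult_pos_pos) auto
  then have w: "0 < w" and dMw: "(1 + \<nu>) * real d * real M * w \<le> 1 / 2"
    by (simp_all add: w_def field_simps)
  have M: "\<nu> + 2 \<le> 2 * real M"
    using assms(1) by (simp add: M_def) (use le_of_int_ceiling[of \<nu>] in linarith)
  have "K / w < real J + 1"
    using assms(2) w by (simp add: J_def)
  then have J: "K < (real J + 1) * w"
    using w by (simp add: field_simps)
  have \<tau>: "\<nu> + (real d - 1) * (\<nu> + 3) \<le> tauseq \<nu> (d - 1)"
    using tauseq_ge[of \<nu> "d - 1"] assms by (simp add: of_nat_diff)
  note cover = covering_string_exists[OF less_imp_le[OF assms(1)] assms(3) w M dMw J refl \<tau>]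
  show ?thesis
    unfolding diophantine_string_covers_def[symmetric]
    apply (intro exI[of _ "(d - 1) * (J + 1) + 1"] allI impI; elim conjE exE)
    subgoal premises prems for \<theta> C
      using cover[OF prems(2,3,1)] by blast
    done
qed

end
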